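(* Let $s_{m,n}(x)=S_{\lambda(m,n)}(x,\tfrac12,0,0,\ldots)$ for $m,n\in\mathbb{Z}$. Then: (1) for all $m,n\in\mathbb{Z}$, the triple $(\tau_0,\tau_1,\tau_2)=(s_{m,n},s_{m+1,n},s_{m+1,n+1})$ solves $$\Big(D_x^2-xD_x-\frac{\alpha_i-\alpha_{i+1}}{3}\Big)\tau_i\cdot\tau_{i+1}=0\quad(i=0,1,2)$$ with $(\alpha_0,\alpha_1,\alpha_2)=(3m+1,3(n-m)+1,-3n+1)$; (2) for all $m,n\in\mathbb{Z}$, the triple $(\tau_0,\tau_1,\tau_2)=(s_{m,n},s_{m,n+1},s_{m+1,n+1})$ solves the same system with $(\alpha_0,\alpha_1,\alpha_2)=(3n+2,3(m-n)-1,-3m+2)$.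
   Context: Indices mod 3; $D_xF\cdot G=F'G-FG'$, $D_x^2F\cdot G=F''G-2F'G'+FG''$. Schur functions: $S_\lambda(t)=\det(p_{\lambda_i-i+j}(t))_{1\le i,j\le l(\lambda)}$ with $\sum_{n\ge0}p_n(t)z^n=\exp(\sum_{k\ge1}t_kz^k)$, $p_n=0$ for $n<0$, $S_\emptyset=1$. A Maya diagram is $M\subset\mathbb{Z}$ containing all sufficiently negative and no sufficiently large integers; writing $M=\{\cdots<m_3<m_2<m_1\}$, its partition is defined by $m_i-m_{i+1}=\lambda_i-\lambda_{i+1}+1$. With $D_l=\{k\in\mathbb{Z}:k<l\}$, $\lambda(m,n)$ is the partition of $M(m,n)=3D_m\cup(3D_n+1)\cup(3D_0+2)$. *)

theory Defs
  imports "HOL-Analysis.Analysis" "HOL-Computational_Algebra.Formal_Power_Series"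
    "Jordan_Normal_Form.Determinant"
begin

text \<open>Elementary Schur polynomials: sum_n p_n(t) z^n = exp(sum_{k>=1} t_k z^k),
  with p_n = 0 for n < 0. The sequence t is indexed by k >= 1 (t 0 is ignored).\<close>
definition schur_p :: "(nat \<Rightarrow> real) \<Rightarrow> int \<Rightarrow> real" where
  "schur_p t n = (if n < 0 then 0
     else fps_nth (fps_exp 1 oo Abs_fps (\<lambda>k. if k = 0 then 0 else t k)) (nat n))"

text \<open>Elements of a Maya diagram in decreasing order: maya_seq M (i-1) = m_i.\<close>
fun maya_seq :: "int set \<Rightarrow> nat \<Rightarrow> int" where
  "maya_seq M 0 = Sup M"
| "maya_seq M (Suc i) = Sup {k \<in> M. k < maya_seq M i}"

definition maya_charge :: "int set \<Rightarrow> int" where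
  "maya_charge M = (THE c. \<exists>N. \<forall>i\<ge>N. maya_seq M i + int (i + 1) = c)"

text \<open>Partition of a Maya diagram: lambda_i for i >= 1, determined by
  m_i - m_{i+1} = lambda_i - lambda_{i+1} + 1 and lambda_i = 0 eventually.\<close>
definition maya_part :: "int set \<Rightarrow> nat \<Rightarrow> int" where
  "maya_part M i = maya_seq M (i - 1) + int i - maya_charge M"

definition part_length :: "(nat \<Rightarrow> int) \<Rightarrow> nat" where
  "part_length lam = card {i. 1 \<le> i \<and> lam i \<noteq> 0}"

definition schur :: "(nat \<Rightarrow> int) \<Rightarrow> (nat \<Rightarrow> real) \<Rightarrow> real" where
  "schur lam t = (let l = part_length lam in
     det (mat l l (\<lambda>(i, j). schur_p t (lam (i + 1) - int (i + 1) + int (j + 1)))))"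

definition D_set :: "int \<Rightarrow> int set" where
  "D_set l = {k. k < l}"

definition M_mn :: "int \<Rightarrow> int \<Rightarrow> int set" where
  "M_mn m n = ((\<lambda>k. 3 * k) ` D_set m) \<union> ((\<lambda>k. 3 * k + 1) ` D_set n)
              \<union> ((\<lambda>k. 3 * k + 2) ` D_set 0)"

definition lambda_mn :: "int \<Rightarrow> int \<Rightarrow> nat \<Rightarrow> int" where
  "lambda_mn m n = maya_part (M_mn m n)"

definition s_mn :: "int \<Rightarrow> int \<Rightarrow> real \<Rightarrow> real" where
  "s_mn m n x = schur (lambda_mn m n)
      (\<lambda>k. if k = 1 then x else if k = 2 then 1/2 else 0)"

text \<open>(D_x^2 - x D_x - c) F . G evaluated at x.\<close>
definition hirota :: "real \<Rightarrow> (real \<Rightarrow> real) \<Rightarrow> (real \<Rightarrow> real) \<Rightarrow> real \<Rightarrow> real" where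
  "hirota c F G x =
     deriv (deriv F) x * G x - 2 * deriv F x * deriv G x + F x * deriv (deriv G) x
     - x * (deriv F x * G x - F x * deriv G x) - c * F x * G x"

definition solves_system :: "(real \<Rightarrow> real) \<Rightarrow> (real \<Rightarrow> real) \<Rightarrow> (real \<Rightarrow> real)
    \<Rightarrow> real \<Rightarrow> real \<Rightarrow> real \<Rightarrow> bool" where
  "solves_system t0 t1 t2 a0 a1 a2 \<longleftrightarrow> (\<forall>x.
      hirota ((a0 - a1) / 3) t0 t1 x = 0 \<and>
      hirota ((a1 - a2) / 3) t1 t2 x = 0 \<and>
      hirota ((a2 - a0) / 3) t2 t0 x = 0)"

end

theory Submission
  imports Defs
begin

(* Write p_n = p_n(x, 1/2, 0, 0, ...); then p_n' = p_(n-1) and n p_n = x p_(n-1) + p_(n-2).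
   For a Maya diagram M and a cut L below which M is full, S_lambda(M) is, up to sign, the
   determinant W_r = det (p_(b_i - j)) over the r elements L + b_i of M above the cut, and adding
   a bead k to M appends b_r = k - L, which turns W_r into W_(r+1).  Rows of the form
   (p_(b_i - h))_i, together with the unit row e_r, express W, W', W'' and the recurrence, so
   that (D_x^2 - x D_x - (b_r - r)) W_r . W_(r+1) = 0 becomes a three-term Pluecker relation.
   Each equation of the system adds one bead to M(m, n), up to a translation of the diagram,
   which does not change the partition. *)

section \<open>The polynomials \<open>p\<^sub>n(x, 1/2, 0, 0, \<dots>)\<close>\<close>

definition times_x :: "real \<Rightarrow> nat \<Rightarrow> real" where
  "times_x x = (\<lambda>k. if k = 1 then x else if k = 2 then 1/2 else 0)"

text \<open>The specialisation \<open>p\<^sub>n(x, 1/2, 0, 0, \<dots>)\<close> has generating function \<open>exp(x z + z\<^sup>2/2)\<close>: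
  it is a rescaled Hermite polynomial.\<close>
definition hermite_p :: "int \<Rightarrow> real \<Rightarrow> real" where
  "hermite_p n x = schur_p (times_x x) n"

definition hermite_gf :: "real \<Rightarrow> real fps" where
  "hermite_gf x = fps_exp 1 oo Abs_fps (\<lambda>k. if k = 0 then 0 else times_x x k)"

lemma fps_deriv_hermite_gf: "fps_deriv (hermite_gf x) = hermite_gf x * (fps_const x + fps_X)"
proof -
  let ?A = "Abs_fps (\<lambda>k. if k = 0 then 0 else times_x x k)"
  have "fps_deriv (hermite_gf x) = (fps_deriv (fps_exp 1) oo ?A) * fps_deriv ?A"
    unfolding hermite_gf_def by (rule fps_compose_deriv) simp
  also have "fps_deriv ?A = fps_const x + fps_X"
    by (rule fps_ext) (auto simp: times_x_def fps_X_def)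
  finally show ?thesis by (simp add: hermite_gf_def)
qed

lemma hermite_gf_coeff_recurrence:
  "of_nat (Suc n) * fps_nth (hermite_gf x) (Suc n)
     = x * fps_nth (hermite_gf x) n + (if n = 0 then 0 else fps_nth (hermite_gf x) (n - 1))"
  using arg_cong[OF fps_deriv_hermite_gf, of "\<lambda>f. fps_nth f n"]
  by (simp add: algebra_simps fps_mult_fps_X_plus_1_nth)

lemma hermite_p_eq_coeff: "hermite_p n x = (if n < 0 then 0 else fps_nth (hermite_gf x) (nat n))"
  by (simp add: hermite_p_def schur_p_def hermite_gf_def)

lemma hermite_p_neg: "n < 0 \<Longrightarrow> hermite_p n x = 0"
  by (simp add: hermite_p_eq_coeff)

lemma hermite_p_0 [simp]: "hermite_p 0 x = 1"
  by (simp add: hermite_p_eq_coeff hermite_gf_def)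

lemma hermite_p_recurrence: "of_int n * hermite_p n x = x * hermite_p (n - 1) x + hermite_p (n - 2) x"
proof (cases "n \<ge> 1")
  case True
  then obtain k where k: "n = int (Suc k)"
    by (metis add.commute le_Suc_ex nat_int of_nat_Suc zle_iff_zadd)
  show ?thesis
  proof (cases k)
    case 0
    then show ?thesis using hermite_gf_coeff_recurrence[of 0 x] k by (simp add: hermite_p_eq_coeff)
  next
    case (Suc j)
    have "n - 1 = int (Suc j)" "n - 2 = int j" using k Suc by auto
    then show ?thesis
      using hermite_gf_coeff_recurrence[of k x] k Suc by (simp add: hermite_p_eq_coeff nat_add_distrib)
  qed
next
  case False
  then show ?thesis by (cases "n = 0") (auto simp: hermite_p_neg)
qed

lemma hermite_p_has_real_derivative: "(hermite_p n has_real_derivative hermite_p (n - 1) x) (at x)"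
proof (induction "nat n" arbitrary: n x rule: less_induct)
  case less
  show ?case
  proof (cases "n \<ge> 1")
    case False
    then have "hermite_p n = (\<lambda>x. if n = 0 then 1 else 0)" by (auto simp: hermite_p_neg)
    moreover have "hermite_p (n - 1) x = 0" using False by (simp add: hermite_p_neg)
    ultimately show ?thesis by simp
  next
    case True
    have IH: "(hermite_p k has_real_derivative hermite_p (k - 1) y) (at y)" if "k < n" for k y
    proof (cases "k \<ge> 0")
      case True
      then show ?thesis using less \<open>k < n\<close> by auto
    next
      case False
      then have "hermite_p k = (\<lambda>x. 0)" by (auto simp: hermite_p_neg)
      then show ?thesis using False by (simp add: hermite_p_neg)
    qed
    have "hermite_p n = (\<lambda>x. (x * hermite_p (n - 1) x + hermite_p (n - 2) x) / of_int n)"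
      using hermite_p_recurrence[of n] True by (auto simp: field_simps)
    moreover have "((\<lambda>x. (x * hermite_p (n - 1) x + hermite_p (n - 2) x) / of_int n) has_real_derivative
       (1 * hermite_p (n - 1) x + hermite_p (n - 1 - 1) x * x + hermite_p (n - 2 - 1) x) / of_int n) (at x)"
      by (intro DERIV_cdivide DERIV_add DERIV_mult DERIV_ident IH) auto
    moreover have "(1 * hermite_p (n - 1) x + hermite_p (n - 1 - 1) x * x + hermite_p (n - 2 - 1) x) / of_int n
        = hermite_p (n - 1) x"
      using hermite_p_recurrence[of "n - 1" x] True by (simp add: field_simps)
    ultimately show ?thesis by simp
  qed
qed

section \<open>Determinants of row functions\<close>

definition detf :: "nat \<Rightarrow> (nat \<Rightarrow> nat \<Rightarrow> real) \<Rightarrow> real" where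
  "detf n f = det (mat n n (\<lambda>(j, i). f j i))"

lemma detf_leibniz:
  "detf n f = (\<Sum>p\<in>{p. p permutes {0..<n}}. signof p * (\<Prod>i=0..<n. f i (p i)))"
proof -
  have "detf n f = (\<Sum>p\<in>{p. p permutes {0..<n}}.
      signof p * (\<Prod>i=0..<n. mat n n (\<lambda>(j, i). f j i) $$ (i, p i)))"
    unfolding detf_def by (rule det_def') simp
  also have "\<dots> = (\<Sum>p\<in>{p. p permutes {0..<n}}. signof p * (\<Prod>i=0..<n. f i (p i)))"
    by (intro sum.cong refl arg_cong2[where f="(*)"] prod.cong) (auto simp: permutes_in_image)
  finally show ?thesis .
qed

lemma detf_cong: "(\<And>j i. j < n \<Longrightarrow> i < n \<Longrightarrow> f j i = g j i) \<Longrightarrow> detf n f = detf n g"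
  unfolding detf_def by (intro arg_cong[where f=det] eq_matI) auto

lemma detf_transpose: "detf n f = detf n (\<lambda>j i. f i j)"
proof -
  have "detf n f = det (transpose_mat (mat n n (\<lambda>(j, i). f j i)))"
    unfolding detf_def using det_transpose[of "mat n n (\<lambda>(j, i). f j i)" n] by simp
  also have "transpose_mat (mat n n (\<lambda>(j, i). f j i)) = mat n n (\<lambda>(j, i). f i j)"
    by (rule eq_matI) auto
  finally show ?thesis by (simp add: detf_def)
qed

lemma detf_identical_rows:
  assumes "j < n" "k < n" "j \<noteq> k" "\<And>i. i < n \<Longrightarrow> f j i = f k i"
  shows "detf n f = 0"
  unfolding detf_def
  by (rule det_identical_rows[of _ n j k]) (use assms in \<open>auto intro!: eq_vecI\<close>)

lemma detf_permute_rows: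
  assumes "p permutes {0..<n}"
  shows "detf n (\<lambda>j. f (p j)) = signof p * detf n f"
proof -
  have "det (mat n n (\<lambda>(j, i). mat n n (\<lambda>(j, i). f j i) $$ (p j, i)))
      = signof p * det (mat n n (\<lambda>(j, i). f j i))"
    by (rule det_permute_rows[OF _ assms]) simp
  moreover have "mat n n (\<lambda>(j, i). mat n n (\<lambda>(j, i). f j i) $$ (p j, i)) = mat n n (\<lambda>(j, i). f (p j) i)"
    using assms by (intro eq_matI) (auto simp: permutes_in_image)
  ultimately show ?thesis by (simp add: detf_def)
qed

lemma detf_permute_cols:
  assumes "p permutes {0..<n}"
  shows "detf n (\<lambda>j i. f j (p i)) = signof p * detf n f"
proof -
  have "detf n (\<lambda>j i. f j (p i)) = detf n (\<lambda>i j. f j (p i))" by (rule detf_transpose)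
  also have "\<dots> = signof p * detf n (\<lambda>i j. f j i)" by (rule detf_permute_rows[OF assms])
  also have "detf n (\<lambda>i j. f j i) = detf n f" by (rule detf_transpose[symmetric])
  finally show ?thesis .
qed

lemma detf_swap_rows:
  assumes "j < n" "k < n" "j \<noteq> k"
  shows "detf n (f(j := f k, k := f j)) = - detf n f"
proof -
  let ?p = "Transposition.transpose j k"
  have p: "?p permutes {0..<n}" using assms by (intro permutes_swap_id) auto
  have "f(j := f k, k := f j) = (\<lambda>a. f (?p a))"
    using assms by (auto simp: Transposition.transpose_def)
  moreover have "sign ?p = (-1::int)" using assms by (simp add: sign_swap_id)
  ultimately show ?thesis using detf_permute_rows[OF p, of f] by simp
qed

lemma detf_row_linear:
  assumes "j < n"
  obtains K where "\<And>v. detf n (f(j := v)) = (\<Sum>i<n. v i * K i)"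
proof
  fix v
  let ?A = "mat n n (\<lambda>(a, b). f a b)" and ?B = "mat n n (\<lambda>(a, b). (f(j := v)) a b)"
  have "detf n (f(j := v)) = (\<Sum>i<n. ?B $$ (j, i) * cofactor ?B j i)"
    unfolding detf_def by (rule laplace_expansion_row) (use assms in auto)
  also have "\<dots> = (\<Sum>i<n. v i * cofactor ?A j i)"
  proof (intro sum.cong refl)
    fix i assume i: "i \<in> {..<n}"
    have "mat_delete ?B j i = mat_delete ?A j i"
      unfolding mat_delete_def by (intro eq_matI) auto
    then show "?B $$ (j, i) * cofactor ?B j i = v i * cofactor ?A j i"
      using i assms by (simp add: cofactor_def)
  qed
  finally show "detf n (f(j := v)) = (\<Sum>i<n. v i * cofactor ?A j i)" .
qed

lemma detf_row_lincomb:
  assumes "j < n"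
  shows "detf n (f(j := (\<lambda>i. a * u i + b * w i))) = a * detf n (f(j := u)) + b * detf n (f(j := w))"
proof -
  obtain K where K: "\<And>v. detf n (f(j := v)) = (\<Sum>i<n. v i * K i)"
    using detf_row_linear[OF assms] by blast
  show ?thesis unfolding K by (simp add: sum.distrib sum_distrib_left algebra_simps)
qed

lemma detf_zero_row:
  assumes "j < n" "\<And>i. f j i = 0"
  shows "detf n f = 0"
proof -
  obtain K where K: "\<And>v. detf n (f(j := v)) = (\<Sum>i<n. v i * K i)"
    using detf_row_linear[OF assms(1)] by blast
  have "f = f(j := (\<lambda>i. 0))" using assms(2) by (auto simp: fun_eq_iff)
  then have "detf n f = detf n (f(j := (\<lambda>i. 0)))" by simp
  also have "\<dots> = 0" unfolding K by simp
  finally show ?thesis .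
qed

lemma detf_last_row_unit:
  assumes "\<And>i. i < Suc n \<Longrightarrow> f n i = (if i = n then 1 else 0)"
  shows "detf (Suc n) f = detf n f"
proof -
  let ?A = "mat (Suc n) (Suc n) (\<lambda>(j, i). f j i)"
  have "detf (Suc n) f = (\<Sum>i<Suc n. ?A $$ (n, i) * cofactor ?A n i)"
    unfolding detf_def by (rule laplace_expansion_row) auto
  also have "\<dots> = (\<Sum>i<Suc n. if i = n then cofactor ?A n i else 0)"
    using assms by (intro sum.cong) auto
  also have "\<dots> = det (mat_delete ?A n n)" by (simp add: cofactor_def)
  also have "mat_delete ?A n n = mat n n (\<lambda>(j, i). f j i)"
    unfolding mat_delete_def by (intro eq_matI) auto
  finally show ?thesis by (simp add: detf_def)
qed

lemma sum_detf_replace_row: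
  "(\<Sum>j<n. detf n (f(j := g j))) =
   (\<Sum>p\<in>{p. p permutes {0..<n}}. signof p * (\<Sum>j<n. g j (p j) * (\<Prod>i\<in>{0..<n}-{j}. f i (p i))))"
proof -
  have "(\<Sum>j<n. detf n (f(j := g j))) =
     (\<Sum>j<n. \<Sum>p\<in>{p. p permutes {0..<n}}. signof p * (g j (p j) * (\<Prod>i\<in>{0..<n}-{j}. f i (p i))))"
  proof (intro sum.cong refl)
    fix j assume j: "j \<in> {..<n}"
    show "detf n (f(j := g j)) =
        (\<Sum>p\<in>{p. p permutes {0..<n}}. signof p * (g j (p j) * (\<Prod>i\<in>{0..<n}-{j}. f i (p i))))"
      unfolding detf_leibniz
    proof (intro sum.cong refl arg_cong2[where f="(*)"])
      fix p
      have "(\<Prod>i=0..<n. (f(j := g j)) i (p i))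
          = (f(j := g j)) j (p j) * (\<Prod>i\<in>{0..<n}-{j}. (f(j := g j)) i (p i))"
        using j by (intro prod.remove) auto
      also have "(\<Prod>i\<in>{0..<n}-{j}. (f(j := g j)) i (p i)) = (\<Prod>i\<in>{0..<n}-{j}. f i (p i))"
        by (intro prod.cong) auto
      finally show "(\<Prod>i=0..<n. (f(j := g j)) i (p i)) = g j (p j) * (\<Prod>i\<in>{0..<n}-{j}. f i (p i))"
        by simp
    qed
  qed
  also have "\<dots> = (\<Sum>p\<in>{p. p permutes {0..<n}}. \<Sum>j<n. signof p * (g j (p j) * (\<Prod>i\<in>{0..<n}-{j}. f i (p i))))"
    by (rule sum.swap)
  finally show ?thesis by (simp add: sum_distrib_left)
qed

lemma detf_has_real_derivative:
  assumes "\<And>j i. ((\<lambda>x. F j i x) has_real_derivative F' j i x) (at x)"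
  shows "((\<lambda>x. detf n (\<lambda>j i. F j i x)) has_real_derivative
           (\<Sum>j<n. detf n ((\<lambda>j i. F j i x)(j := (\<lambda>i. F' j i x))))) (at x)"
proof -
  have leibniz: "(\<lambda>x. detf n (\<lambda>j i. F j i x))
      = (\<lambda>x. \<Sum>p\<in>{p. p permutes {0..<n}}. signof p * (\<Prod>i\<in>{0..<n}. F i (p i) x))"
    by (simp add: detf_leibniz)
  have "((\<lambda>x. \<Sum>p\<in>{p. p permutes {0..<n}}. signof p * (\<Prod>i\<in>{0..<n}. F i (p i) x)) has_real_derivative
     (\<Sum>p\<in>{p. p permutes {0..<n}}. signof p *
        (\<Sum>j\<in>{0..<n}. F' j (p j) x * (\<Prod>i\<in>{0..<n}-{j}. F i (p i) x)))) (at x)"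
    by (intro DERIV_sum DERIV_cmult has_field_derivative_prod assms)
  moreover have "{0..<n} = {..<n}" by auto
  ultimately show ?thesis unfolding leibniz sum_detf_replace_row by simp
qed

lemma sum_detf_scale_row:
  "(\<Sum>j<n. detf n (f(j := (\<lambda>i. (u i - v j) * f j i)))) = ((\<Sum>i<n. u i) - (\<Sum>j<n. v j)) * detf n f"
proof -
  have term_sum: "(\<Sum>j<n. (u (p j) - v j) * f j (p j) * (\<Prod>i\<in>{0..<n}-{j}. f i (p i)))
      = ((\<Sum>i<n. u i) - (\<Sum>j<n. v j)) * (\<Prod>i=0..<n. f i (p i))"
    if p: "p permutes {0..<n}" for p
  proof -
    have "f j (p j) * (\<Prod>i\<in>{0..<n}-{j}. f i (p i)) = (\<Prod>i=0..<n. f i (p i))" if "j < n" for j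
      using that by (subst prod.remove[of "{0..<n}"]) auto
    then have "(\<Sum>j<n. (u (p j) - v j) * f j (p j) * (\<Prod>i\<in>{0..<n}-{j}. f i (p i)))
        = (\<Sum>j<n. u (p j) - v j) * (\<Prod>i=0..<n. f i (p i))"
      by (simp add: sum_distrib_right mult.assoc)
    moreover have "(\<Sum>j<n. u (p j)) = (\<Sum>i<n. u i)"
      using sum.permute[of p "{..<n}" u] p by (simp add: atLeast0LessThan comp_def)
    ultimately show ?thesis by (simp add: sum_subtractf)
  qed
  have "(\<Sum>j<n. detf n (f(j := (\<lambda>i. (u i - v j) * f j i)))) = (\<Sum>p\<in>{p. p permutes {0..<n}}.
      signof p * (\<Sum>j<n. (u (p j) - v j) * f j (p j) * (\<Prod>i\<in>{0..<n}-{j}. f i (p i))))"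
    by (rule sum_detf_replace_row)
  also have "\<dots> = (\<Sum>p\<in>{p. p permutes {0..<n}}.
      ((\<Sum>i<n. u i) - (\<Sum>j<n. v j)) * (signof p * (\<Prod>i=0..<n. f i (p i))))"
    by (intro sum.cong refl) (simp add: term_sum mult.left_commute)
  also have "\<dots> = ((\<Sum>i<n. u i) - (\<Sum>j<n. v j)) * detf n f"
    by (simp add: detf_leibniz sum_distrib_left)
  finally show ?thesis .
qed

lemma detf_kernel_trivial:
  assumes "detf n M \<noteq> 0" "\<And>k. k < n \<Longrightarrow> (\<Sum>i<n. M k i * w i) = 0" "i < n"
  shows "w i = 0"
proof (rule ccontr)
  assume "w i \<noteq> 0"
  let ?A = "mat n n (\<lambda>(j, i). M j i)" and ?v = "vec n w"
  have "?v \<noteq> 0\<^sub>v n" using \<open>w i \<noteq> 0\<close> \<open>i < n\<close> by (metis index_vec index_zero_vec(1))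
  moreover have "?A *\<^sub>v ?v = 0\<^sub>v n"
  proof (rule eq_vecI)
    fix k assume k: "k < dim_vec (0\<^sub>v n :: real vec)"
    then have "(?A *\<^sub>v ?v) $ k = (\<Sum>i<n. M k i * w i)"
      by (simp add: mult_mat_vec_def scalar_prod_def atLeast0LessThan)
    then show "(?A *\<^sub>v ?v) $ k = 0\<^sub>v n $ k" using assms(2) k by simp
  qed simp
  ultimately have "\<exists>v. v \<in> carrier_vec n \<and> v \<noteq> 0\<^sub>v n \<and> ?A *\<^sub>v v = 0\<^sub>v n"
    by (intro exI[of _ ?v]) auto
  then have "det ?A = 0" using det_0_iff_vec_prod_zero_field[of ?A n] by simp
  then show False using assms(1) by (simp add: detf_def)
qed

lemma detf_pluecker_form_linear:
  fixes f :: "nat \<Rightarrow> nat \<Rightarrow> real" and s :: nat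
  defines "P \<equiv> \<lambda>a b. detf (Suc (Suc s)) (f(s := a, Suc s := b))"
  obtains w where "\<And>d. P a b * P c d - P a c * P b d + P a d * P b c = (\<Sum>i<Suc (Suc s). d i * w i)"
proof -
  let ?n = "Suc (Suc s)"
  obtain K1 where K1: "\<And>v. P c v = (\<Sum>i<?n. v i * K1 i)"
    using detf_row_linear[of "Suc s" ?n "f(s := c)"] unfolding P_def by auto
  obtain K2 where K2: "\<And>v. P b v = (\<Sum>i<?n. v i * K2 i)"
    using detf_row_linear[of "Suc s" ?n "f(s := b)"] unfolding P_def by auto
  obtain K3 where K3: "\<And>v. P a v = (\<Sum>i<?n. v i * K3 i)"
    using detf_row_linear[of "Suc s" ?n "f(s := a)"] unfolding P_def by auto
  define w where "w = (\<lambda>i. P a b * K1 i - P a c * K2 i + P b c * K3 i)"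
  have "P a b * P c d - P a c * P b d + P a d * P b c = (\<Sum>i<?n. d i * w i)" for d
  proof -
    have "(\<Sum>i<?n. d i * w i)
        = (\<Sum>i<?n. P a b * (d i * K1 i) - P a c * (d i * K2 i) + P b c * (d i * K3 i))"
      unfolding w_def by (intro sum.cong refl) (simp add: algebra_simps)
    also have "\<dots> = P a b * (\<Sum>i<?n. d i * K1 i) - P a c * (\<Sum>i<?n. d i * K2 i)
        + P b c * (\<Sum>i<?n. d i * K3 i)"
      by (simp only: sum.distrib sum_subtractf sum_distrib_left)
    also have "\<dots> = P a b * P c d - P a c * P b d + P a d * P b c"
      unfolding K1[of d] K2[of d] K3[of d] by simp
    finally show ?thesis by simp
  qed
  then show ?thesis by (rule that)
qed

lemma detf_pluecker:
  fixes f :: "nat \<Rightarrow> nat \<Rightarrow> real" and s :: nat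
  defines "P \<equiv> \<lambda>a b. detf (Suc (Suc s)) (f(s := a, Suc s := b))"
  shows "P a b * P c d - P a c * P b d + P a d * P b c = 0"
proof -
  let ?n = "Suc (Suc s)"
  define G where "G = (\<lambda>d. P a b * P c d - P a c * P b d + P a d * P b c)"
  obtain w where G_linear: "\<And>v. G v = (\<Sum>i<?n. v i * w i)"
    using detf_pluecker_form_linear[of s f a b c] unfolding G_def P_def by blast
  have P_alt: "P v u = - P u v" for u v
  proof -
    have "(f(s := u, Suc s := v))(s := (f(s := u, Suc s := v)) (Suc s), Suc s := (f(s := u, Suc s := v)) s)
        = f(s := v, Suc s := u)" by (auto simp: fun_eq_iff)
    then show ?thesis
      unfolding P_def using detf_swap_rows[of s ?n "Suc s" "f(s := u, Suc s := v)"] by simp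
  qed
  have P_fixed_row: "P u (f k) = 0" if "k < s" for u k
    unfolding P_def by (rule detf_identical_rows[where j=k and k="Suc s"]) (use that in auto)
  have P_same: "P u u = 0" for u
    unfolding P_def by (rule detf_identical_rows[where j=s and k="Suc s"]) auto
  have G_rows: "G ((f(s := u, Suc s := v)) k) = 0"
    if "k < ?n" "u \<in> {a, b, c}" "v \<in> {a, b, c}" for u v k
  proof -
    have "G a = 0" "G b = 0" "G c = 0"
      using P_same P_alt[of a c] P_alt[of a b] P_alt[of b c] by (simp_all add: G_def)
    moreover have "G (f k) = 0" if "k < s" for k
      using P_fixed_row[OF that] by (simp add: G_def)
    ultimately show ?thesis using that by (auto simp: less_Suc_eq)
  qed
  txt \<open>\<open>G\<close> is a linear form vanishing on the rows of any nonsingular matrix among the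
    \<open>P u v\<close>; if there is none, \<open>G\<close> vanishes trivially.\<close>
  have G_vanishes: "G d = 0" if "P u v \<noteq> 0" "u \<in> {a, b, c}" "v \<in> {a, b, c}" for u v
  proof -
    have "w i = 0" if "i < ?n" for i
      by (rule detf_kernel_trivial[where M="f(s := u, Suc s := v)"])
        (use \<open>P u v \<noteq> 0\<close> G_rows[OF _ \<open>u \<in> _\<close> \<open>v \<in> _\<close>] G_linear that in \<open>auto simp: P_def\<close>)
    then show ?thesis by (simp add: G_linear)
  qed
  show ?thesis
  proof (cases "P a b = 0 \<and> P a c = 0 \<and> P b c = 0")
    case True
    then show ?thesis by simp
  next
    case False
    then show ?thesis using G_vanishes[of a b] G_vanishes[of a c] G_vanishes[of b c]
      by (auto simp: G_def)
  qed
qed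

section \<open>Hermite determinants and their bilinear equation\<close>

lemma hirota_cmult_explicit:
  assumes "\<And>y. (F has_real_derivative F1 y) (at y)" "\<And>y. (F1 has_real_derivative F2 y) (at y)"
    and "\<And>y. (G has_real_derivative G1 y) (at y)" "\<And>y. (G1 has_real_derivative G2 y) (at y)"
  shows "hirota c (\<lambda>y. a * F y) (\<lambda>y. b * G y) x =
    a * b * (F2 x * G x - 2 * F1 x * G1 x + F x * G2 x - x * (F1 x * G x - F x * G1 x) - c * F x * G x)"
proof -
  have "deriv (\<lambda>y. a * F y) = (\<lambda>y. a * F1 y)" "deriv (\<lambda>y. a * F1 y) = (\<lambda>y. a * F2 y)"
    "deriv (\<lambda>y. b * G y) = (\<lambda>y. b * G1 y)" "deriv (\<lambda>y. b * G1 y) = (\<lambda>y. b * G2 y)"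
    using assms by (auto intro!: ext DERIV_imp_deriv DERIV_cmult)
  then show ?thesis unfolding hirota_def by (simp add: algebra_simps)
qed

definition hermite_det :: "(nat \<Rightarrow> int) \<Rightarrow> nat \<Rightarrow> real \<Rightarrow> real" where
  "hermite_det b n x = detf n (\<lambda>j i. hermite_p (b i - int j) x)"

text \<open>Rows of the Jacobi--Trudi type matrices \<open>(p\<^bsub>b\<^sub>i - h\<^esub>)\<^sub>i\<close>, indexed by a label \<open>Some h\<close>;
  the label \<open>None\<close> stands for the unit row \<open>e\<^sub>r\<close>, which lets \<open>r \<times> r\<close> and \<open>(r+1) \<times> (r+1)\<close>
  determinants be compared inside one Pluecker relation.\<close>
locale hermite_rows =
  fixes b :: "nat \<Rightarrow> int" and r :: nat
begin

definition row :: "real \<Rightarrow> nat option \<Rightarrow> nat \<Rightarrow> real" where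
  "row x l i = (case l of Some h \<Rightarrow> hermite_p (b i - int h) x | None \<Rightarrow> (if i = r then 1 else 0))"

definition det_lab :: "(nat \<Rightarrow> nat option) \<Rightarrow> real \<Rightarrow> real" where
  "det_lab L x = detf (Suc r) (\<lambda>j. row x (L j))"

definition raised :: "nat \<Rightarrow> (nat \<Rightarrow> nat option) \<Rightarrow> real \<Rightarrow> nat \<Rightarrow> real" where
  "raised k L x j = (case L j of None \<Rightarrow> 0 | Some h \<Rightarrow> det_lab (L(j := Some (h + k))) x)"

definition raise_sum :: "nat \<Rightarrow> (nat \<Rightarrow> nat option) \<Rightarrow> real \<Rightarrow> real" where
  "raise_sum k L x = (\<Sum>j<Suc r. raised k L x j)"

definition weight :: "nat option \<Rightarrow> real" where
  "weight l = (case l of Some h \<Rightarrow> of_nat h | None \<Rightarrow> of_int (b r))"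

lemma det_lab_upd: "det_lab (L(j := l)) x = detf (Suc r) ((\<lambda>k. row x (L k))(j := row x l))"
  unfolding det_lab_def by (intro arg_cong[where f="detf (Suc r)"]) (auto simp: fun_eq_iff)

lemma det_lab_cong: "(\<And>j. j < Suc r \<Longrightarrow> L j = L' j) \<Longrightarrow> det_lab L x = det_lab L' x"
  unfolding det_lab_def by (intro detf_cong) auto

lemma det_lab_identical:
  "j < Suc r \<Longrightarrow> k < Suc r \<Longrightarrow> j \<noteq> k \<Longrightarrow> L j = L k \<Longrightarrow> det_lab L x = 0"
  unfolding det_lab_def by (rule detf_identical_rows[where j=j and k=k]) auto

lemma det_lab_swap:
  assumes "j < Suc r" "k < Suc r" "j \<noteq> k"
  shows "det_lab (L(j := L k, k := L j)) x = - det_lab L x"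
proof -
  have "(\<lambda>i. row x ((L(j := L k, k := L j)) i)) = (\<lambda>i. row x (L i))(j := row x (L k), k := row x (L j))"
    using assms by (auto simp: fun_eq_iff)
  then show ?thesis unfolding det_lab_def using detf_swap_rows[OF assms, of "\<lambda>i. row x (L i)"] by simp
qed

lemma det_lab_has_real_derivative: "((\<lambda>x. det_lab L x) has_real_derivative raise_sum 1 L x) (at x)"
proof -
  define F' where "F' = (\<lambda>j i (x::real). case L j of None \<Rightarrow> 0 | Some h \<Rightarrow> hermite_p (b i - int h - 1) x)"
  have "((\<lambda>x. row x (L j) i) has_real_derivative F' j i x) (at x)" for j i
    using hermite_p_has_real_derivative[of "b i - int _" x]
    by (cases "L j") (simp_all add: row_def F'_def)
  then have "((\<lambda>x. detf (Suc r) (\<lambda>j i. row x (L j) i)) has_real_derivative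
     (\<Sum>j<Suc r. detf (Suc r) ((\<lambda>j i. row x (L j) i)(j := (\<lambda>i. F' j i x))))) (at x)"
    by (rule detf_has_real_derivative)
  moreover have "detf (Suc r) ((\<lambda>j i. row x (L j) i)(j := (\<lambda>i. F' j i x))) = raised 1 L x j"
    if "j < Suc r" for j
  proof (cases "L j")
    case None
    then show ?thesis using that by (auto intro!: detf_zero_row[of j] simp: F'_def raised_def)
  next
    case (Some h)
    then have "(\<lambda>i. F' j i x) = row x (Some (Suc h))"
      by (auto simp: F'_def row_def fun_eq_iff algebra_simps)
    then show ?thesis using Some by (simp add: det_lab_upd raised_def)
  qed
  ultimately show ?thesis unfolding det_lab_def raise_sum_def by simp
qed

text \<open>Raising every label by two is expressed through the recurrence
  \<open>p\<^bsub>m-2\<^esub> = m p\<^sub>m - x p\<^bsub>m-1\<^esub>\<close>; summed over the rows, the factors \<open>m = b\<^sub>i - h\<close> collapse to a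
  trace.  The unit row \<open>e\<^sub>r\<close> gets weight \<open>b\<^sub>r\<close>, so that its scaled copy vanishes.\<close>
lemma raise_sum_2:
  "raise_sum 2 L x = ((\<Sum>i<Suc r. of_int (b i)) - (\<Sum>j<Suc r. weight (L j))) * det_lab L x - x * raise_sum 1 L x"
proof -
  let ?f = "\<lambda>j. row x (L j)"
  have "raised 2 L x j = detf (Suc r) (?f(j := (\<lambda>i. (of_int (b i) - weight (L j)) * ?f j i))) - x * raised 1 L x j"
    if j: "j < Suc r" for j
  proof (cases "L j")
    case None
    then have "detf (Suc r) (?f(j := (\<lambda>i. (of_int (b i) - weight (L j)) * ?f j i))) = 0"
      using j by (intro detf_zero_row[of j]) (auto simp: row_def weight_def)
    then show ?thesis using None by (simp add: raised_def)
  next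
    case (Some h)
    define U where "U = (\<lambda>i. (of_int (b i) - weight (L j)) * ?f j i)"
    define R where "R = row x (Some (Suc h))"
    have "row x (Some (h + 2)) = (\<lambda>i. 1 * U i + (-x) * R i)"
    proof
      fix i
      have "of_int (b i - int h) * hermite_p (b i - int h) x
          = x * hermite_p (b i - int h - 1) x + hermite_p (b i - int h - 2) x"
        by (rule hermite_p_recurrence)
      then show "row x (Some (h + 2)) i = 1 * U i + (-x) * R i"
        using Some by (simp add: row_def weight_def algebra_simps U_def R_def)
    qed
    then have "det_lab (L(j := Some (h + 2))) x = detf (Suc r) (?f(j := U)) - x * detf (Suc r) (?f(j := R))"
      using detf_row_lincomb[OF j, of ?f 1 U "-x" R] by (simp add: det_lab_upd)
    then show ?thesis using Some by (simp add: raised_def det_lab_upd U_def R_def)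
  qed
  then have "raise_sum 2 L x = (\<Sum>j<Suc r.
      detf (Suc r) (?f(j := (\<lambda>i. (of_int (b i) - weight (L j)) * ?f j i))) - x * raised 1 L x j)"
    unfolding raise_sum_def by (intro sum.cong) auto
  also have "\<dots> = (\<Sum>j<Suc r. detf (Suc r) (?f(j := (\<lambda>i. (of_int (b i) - weight (L j)) * ?f j i))))
      - x * raise_sum 1 L x"
    by (simp only: sum_subtractf sum_distrib_left raise_sum_def)
  finally show ?thesis by (simp only: sum_detf_scale_row det_lab_def)
qed


definition lab :: "nat option \<Rightarrow> nat option \<Rightarrow> nat \<Rightarrow> nat option" where
  "lab l1 l2 j = (if Suc j < r then Some j else if Suc j = r then l1 else l2)"

context
  fixes s :: nat
  assumes r_eq: "Suc s = r" and s_pos: "0 < s"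
begin

lemma lab_eq: "lab l1 l2 j = (if j < s then Some j else if j = s then l1 else l2)"
  using r_eq by (auto simp: lab_def)

lemma raised_lab_prefix:
  assumes "0 < k" "j + k \<le> s" "j + k = s \<Longrightarrow> l1 = Some s"
  shows "raised k (lab l1 l2) x j = 0"
proof -
  have "lab l1 l2 j = Some j" using assms by (simp add: lab_eq)
  moreover have "det_lab ((lab l1 l2)(j := Some (j + k))) x = 0"
    by (rule det_lab_identical[where j=j and k="j + k"]) (use assms r_eq in \<open>auto simp: lab_eq\<close>)
  ultimately show ?thesis by (simp add: raised_def)
qed

lemma raise_sum_lab:
  assumes "0 < k" "k \<le> 2" "k = 2 \<Longrightarrow> l1 = Some s"
  shows "raise_sum k (lab l1 l2) x = det_lab ((lab l1 l2)(s - 1 := Some (s - 1 + k))) x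
     + raised k (lab l1 l2) x s + raised k (lab l1 l2) x r"
proof -
  obtain s' where s': "s = Suc s'" using s_pos by (metis gr0_implies_Suc)
  have "(\<Sum>j<s'. raised k (lab l1 l2) x j) = 0"
    using assms by (intro sum.neutral ballI raised_lab_prefix) (auto simp: s')
  then have "(\<Sum>j<s. raised k (lab l1 l2) x j) = det_lab ((lab l1 l2)(s - 1 := Some (s - 1 + k))) x"
    by (simp add: s' raised_def lab_eq)
  moreover have "raise_sum k (lab l1 l2) x
      = (\<Sum>j<s. raised k (lab l1 l2) x j) + raised k (lab l1 l2) x s + raised k (lab l1 l2) x r"
    unfolding raise_sum_def sum.lessThan_Suc[of _ r] sum.lessThan_Suc[of _ s, unfolded r_eq] ..
  ultimately show ?thesis by simp
qed

lemma raise_sum_1_lab_W: "raise_sum 1 (lab (Some s) None) x = det_lab (lab (Some r) None) x"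
proof -
  have "det_lab ((lab (Some s) None)(s - 1 := Some s)) x = 0"
    by (rule det_lab_identical[where j="s - 1" and k=s]) (use s_pos r_eq in \<open>auto simp: lab_eq\<close>)
  moreover have "det_lab ((lab (Some s) None)(s := Some r)) x = det_lab (lab (Some r) None) x"
    by (rule det_lab_cong) (auto simp: lab_eq)
  ultimately show ?thesis
    using s_pos r_eq by (simp add: raise_sum_lab raised_def lab_eq)
qed

lemma raise_sum_1_lab_V: "raise_sum 1 (lab (Some s) (Some r)) x = det_lab (lab (Some s) (Some (Suc r))) x"
proof -
  have "det_lab ((lab (Some s) (Some r))(s - 1 := Some s)) x = 0"
    by (rule det_lab_identical[where j="s - 1" and k=s]) (use s_pos r_eq in \<open>auto simp: lab_eq\<close>)
  moreover have "det_lab ((lab (Some s) (Some r))(s := Some r)) x = 0"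
    by (rule det_lab_identical[where j=s and k=r]) (use r_eq in \<open>auto simp: lab_eq\<close>)
  moreover have "det_lab ((lab (Some s) (Some r))(r := Some (Suc r))) x = det_lab (lab (Some s) (Some (Suc r))) x"
    by (rule det_lab_cong) (use r_eq in \<open>auto simp: lab_eq\<close>)
  ultimately show ?thesis
    using s_pos r_eq by (simp add: raise_sum_lab raised_def lab_eq)
qed

text \<open>The term with labels \<open>0, \<dots>, s - 2, s, r, None\<close> occurs in the second derivative
  of \<open>W\<close> and, with the opposite sign, in the double raising of \<open>W\<close>.\<close>
lemma raise_sums_lab_W:
  "raise_sum 1 (lab (Some r) None) x + raise_sum 2 (lab (Some s) None) x = 2 * det_lab (lab (Some (Suc r)) None) x"
proof -
  let ?L = "(lab (Some s) None)(s - 1 := Some r)"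
  have "s - 1 < Suc r" "s < Suc r" "s - 1 \<noteq> s" using s_pos r_eq by auto
  then have "det_lab ?L x = - det_lab (?L(s - 1 := ?L s, s := ?L (s - 1))) x"
    using det_lab_swap[of "s - 1" s ?L x] by linarith
  also have "det_lab (?L(s - 1 := ?L s, s := ?L (s - 1))) x = det_lab ((lab (Some r) None)(s - 1 := Some s)) x"
    by (rule det_lab_cong) (use s_pos in \<open>auto simp: lab_eq\<close>)
  finally have "det_lab ?L x = - det_lab ((lab (Some r) None)(s - 1 := Some s)) x" .
  moreover have "det_lab ((lab l None)(s := Some (Suc r))) x = det_lab (lab (Some (Suc r)) None) x" for l
    by (rule det_lab_cong) (auto simp: lab_eq)
  ultimately show ?thesis
    using s_pos r_eq by (simp add: raise_sum_lab raised_def lab_eq)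
qed

lemma raise_sums_lab_V:
  "raise_sum 1 (lab (Some s) (Some (Suc r))) x - raise_sum 2 (lab (Some s) (Some r)) x
     = 2 * det_lab (lab (Some r) (Some (Suc r))) x"
proof -
  let ?L = "(lab (Some s) (Some r))(s := Some (Suc r))"
  have "s < Suc r" "r < Suc r" "s \<noteq> r" using r_eq by auto
  then have "det_lab ?L x = - det_lab (?L(s := ?L r, r := ?L s)) x"
    using det_lab_swap[of s r ?L x] by linarith
  also have "det_lab (?L(s := ?L r, r := ?L s)) x = det_lab (lab (Some r) (Some (Suc r))) x"
    by (rule det_lab_cong) (use r_eq in \<open>auto simp: lab_eq\<close>)
  finally have "det_lab ?L x = - det_lab (lab (Some r) (Some (Suc r))) x" .
  moreover have "det_lab ((lab (Some s) l)(s - 1 := Some s)) x = 0" for l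
    by (rule det_lab_identical[where j="s - 1" and k=s]) (use s_pos r_eq in \<open>auto simp: lab_eq\<close>)
  moreover have "det_lab ((lab (Some s) (Some r))(s - 1 := Some r)) x = 0"
    by (rule det_lab_identical[where j="s - 1" and k=r]) (use s_pos r_eq in \<open>auto simp: lab_eq\<close>)
  moreover have "det_lab ((lab (Some s) (Some (Suc r)))(s := Some r)) x = det_lab (lab (Some r) (Some (Suc r))) x"
    by (rule det_lab_cong) (use r_eq in \<open>auto simp: lab_eq\<close>)
  moreover have "det_lab ((lab (Some s) l)(r := Some (Suc (Suc r)))) x
      = det_lab (lab (Some s) (Some (Suc (Suc r)))) x" for l
    by (rule det_lab_cong) (use r_eq in \<open>auto simp: lab_eq\<close>)
  ultimately show ?thesis
    using s_pos r_eq by (simp add: raise_sum_lab raised_def lab_eq)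
qed

lemma pluecker_lab:
  "det_lab (lab (Some s) (Some r)) x * det_lab (lab (Some (Suc r)) None) x
   - det_lab (lab (Some s) (Some (Suc r))) x * det_lab (lab (Some r) None) x
   + det_lab (lab (Some s) None) x * det_lab (lab (Some r) (Some (Suc r))) x = 0"
proof -
  define P where "P = (\<lambda>u v. detf (Suc r) ((\<lambda>j. row x (Some j))(s := u, r := v)))"
  have "det_lab (lab l1 l2) x = P (row x l1) (row x l2)" for l1 l2
    unfolding det_lab_def P_def by (intro detf_cong) (use r_eq in \<open>auto simp: lab_eq less_Suc_eq\<close>)
  then show ?thesis
    using detf_pluecker[where f="\<lambda>j. row x (Some j)" and s=s, unfolded r_eq] unfolding P_def by simp
qed

lemma sum_weight_lab: "(\<Sum>j<Suc r. weight (lab l1 l2 j)) = (\<Sum>j<s. real j) + weight l1 + weight l2"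
  unfolding sum.lessThan_Suc[of _ r] sum.lessThan_Suc[of _ s, unfolded r_eq]
  using r_eq by (simp add: lab_eq weight_def)

lemma bilinear_lab:
  defines "W \<equiv> det_lab (lab (Some s) None)" and "V \<equiv> det_lab (lab (Some s) (Some r))"
    and "W' \<equiv> det_lab (lab (Some r) None)" and "V' \<equiv> det_lab (lab (Some s) (Some (Suc r)))"
  shows "raise_sum 1 (lab (Some r) None) x * V x - 2 * W' x * V' x
     + W x * raise_sum 1 (lab (Some s) (Some (Suc r))) x
     - x * (W' x * V x - W x * V' x) - (of_int (b r) - of_nat r) * W x * V x = 0"
proof -
  define c where "c = (\<Sum>i<Suc r. real_of_int (b i)) - (\<Sum>j<s. real j) - real s"
  have "raise_sum 2 (lab (Some s) None) x = (c - of_int (b r)) * W x - x * W' x"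
    using raise_sum_2[of "lab (Some s) None" x, unfolded sum_weight_lab raise_sum_1_lab_W]
    by (simp add: sum_weight_lab raise_sum_1_lab_W W_def W'_def c_def weight_def)
  moreover have "raise_sum 2 (lab (Some s) (Some r)) x = (c - of_nat r) * V x - x * V' x"
    using raise_sum_2[of "lab (Some s) (Some r)" x, unfolded sum_weight_lab raise_sum_1_lab_V]
    by (simp add: sum_weight_lab raise_sum_1_lab_V V_def V'_def c_def weight_def)
  ultimately have R1: "raise_sum 1 (lab (Some r) None) x
      = 2 * det_lab (lab (Some (Suc r)) None) x - (c - of_int (b r)) * W x + x * W' x"
    and R2: "raise_sum 1 (lab (Some s) (Some (Suc r))) x
      = 2 * det_lab (lab (Some r) (Some (Suc r))) x + (c - of_nat r) * V x - x * V' x"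
    using raise_sums_lab_W[of x] raise_sums_lab_V[of x] by (simp_all add: algebra_simps)
  have "raise_sum 1 (lab (Some r) None) x * V x - 2 * W' x * V' x
     + W x * raise_sum 1 (lab (Some s) (Some (Suc r))) x
     - x * (W' x * V x - W x * V' x) - (of_int (b r) - of_nat r) * W x * V x
     = 2 * (V x * det_lab (lab (Some (Suc r)) None) x - V' x * W' x + W x * det_lab (lab (Some r) (Some (Suc r))) x)"
    unfolding R1 R2 by (simp add: algebra_simps)
  then show ?thesis
    using pluecker_lab[of x] unfolding W_def V_def W'_def V'_def by simp
qed

end

lemma hermite_det_eq_det_lab:
  assumes "Suc s = r"
  shows "hermite_det b r x = det_lab (lab (Some s) None) x"
    and "hermite_det b (Suc r) x = det_lab (lab (Some s) (Some r)) x"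
proof -
  have lab_W: "lab (Some s) None j = (if j < r then Some j else None)"
    and lab_V: "lab (Some s) (Some r) j = (if j \<le> r then Some j else Some r)" for j
    using assms by (auto simp: lab_def)
  have "det_lab (lab (Some s) None) x = detf r (\<lambda>j. row x (lab (Some s) None j))"
    unfolding det_lab_def by (rule detf_last_row_unit) (simp add: lab_W row_def)
  also have "\<dots> = hermite_det b r x"
    unfolding hermite_det_def by (intro detf_cong) (simp add: lab_W row_def)
  finally show "hermite_det b r x = det_lab (lab (Some s) None) x" ..
  show "hermite_det b (Suc r) x = det_lab (lab (Some s) (Some r)) x"
    unfolding hermite_det_def det_lab_def by (intro detf_cong) (simp add: lab_V row_def)
qed

theorem hirota_hermite_det:
  assumes "2 \<le> r"
  shows "hirota (of_int (b r) - of_nat r) (\<lambda>y. c1 * hermite_det b r y) (\<lambda>y. c2 * hermite_det b (Suc r) y) x = 0"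
proof -
  obtain s where r: "Suc s = r" and s: "0 < s" using assms by (cases r) auto
  have W: "hermite_det b r = det_lab (lab (Some s) None)" and V: "hermite_det b (Suc r) = det_lab (lab (Some s) (Some r))"
    using hermite_det_eq_det_lab[OF r] by auto
  have W': "(det_lab (lab (Some s) None) has_real_derivative det_lab (lab (Some r) None) y) (at y)" for y
    using det_lab_has_real_derivative[of "lab (Some s) None" y] raise_sum_1_lab_W[OF r s] by simp
  have V': "(det_lab (lab (Some s) (Some r)) has_real_derivative det_lab (lab (Some s) (Some (Suc r))) y) (at y)" for y
    using det_lab_has_real_derivative[of "lab (Some s) (Some r)" y] raise_sum_1_lab_V[OF r s] by simp
  show ?thesis
    unfolding W V
    by (subst hirota_cmult_explicit[OF W' det_lab_has_real_derivative V' det_lab_has_real_derivative])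
      (use bilinear_lab[OF r s, of x] in \<open>simp add: algebra_simps\<close>)
qed

end

section \<open>Maya diagrams\<close>

lemma int_Sup_mem:
  fixes X :: "int set"
  assumes "X \<noteq> {}" "bdd_above X"
  shows "Sup X \<in> X"
proof -
  obtain x where x: "x \<in> X" "Sup X - 1 < x"
    using less_cSup_iff[OF assms, of "Sup X - 1"] by auto
  moreover have "x \<le> Sup X" using cSup_upper[OF x(1) assms(2)] .
  ultimately show ?thesis by (metis add_le_cancel_left diff_add_cancel order_antisym zless_imp_add1_zle)
qed

lemma inj_on_same_image_permutes:
  assumes "finite A" "inj_on f A" "inj_on g A" "f ` A = g ` A"
  obtains p where "p permutes A" "\<And>x. x \<in> A \<Longrightarrow> f x = g (p x)"
proof -
  have "image_mset f (mset_set A) = image_mset g (mset_set A)"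
    using assms by (simp add: image_mset_mset_set)
  then show ?thesis using image_mset_eq_implies_permutes[OF assms(1)] that by metis
qed

lemma permutes_reverse:
  fixes n :: nat
  obtains p where "p permutes {0..<n}" "\<And>j. j < n \<Longrightarrow> p j = n - 1 - j"
proof -
  have "(\<lambda>j. n - 1 - j) ` {0..<n} = id ` {0..<n}"
  proof
    show "(\<lambda>j. n - 1 - j) ` {0..<n} \<subseteq> id ` {0..<n}" by auto
    show "id ` {0..<n} \<subseteq> (\<lambda>j. n - 1 - j) ` {0..<n}"
    proof
      fix j assume "j \<in> id ` {0..<n}"
      then show "j \<in> (\<lambda>j. n - 1 - j) ` {0..<n}"
        by (intro image_eqI[of _ _ "n - 1 - j"]) auto
    qed
  qed
  then obtain p where p: "p permutes {0..<n}" and rev: "\<And>j. j \<in> {0..<n} \<Longrightarrow> n - 1 - j = id (p j)"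
    by (rule inj_on_same_image_permutes[of "{0..<n}" "\<lambda>j. n - 1 - j" id, rotated 3])
      (auto simp: inj_on_def)
  show ?thesis
  proof (rule that[OF p])
    fix j assume "j < n"
    then show "p j = n - 1 - j" using rev[of j] by simp
  qed
qed

lemma maya_charge_eqI:
  assumes "\<And>i. N \<le> i \<Longrightarrow> maya_seq M i + int (i + 1) = c"
  shows "maya_charge M = c"
  unfolding maya_charge_def
proof (rule the_equality)
  show "\<exists>N. \<forall>i\<ge>N. maya_seq M i + int (i + 1) = c" using assms by blast
next
  fix c' assume "\<exists>N. \<forall>i\<ge>N. maya_seq M i + int (i + 1) = c'"
  then obtain N' where "\<And>i. N' \<le> i \<Longrightarrow> maya_seq M i + int (i + 1) = c'" by blast
  then show "c' = c" using assms[of "max N N'"] by simp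
qed

locale maya_diagram =
  fixes M :: "int set" and lo hi :: int
  assumes less_lo_mem: "k < lo \<Longrightarrow> k \<in> M" and mem_less_hi: "k \<in> M \<Longrightarrow> k < hi"
begin

lemma maya_diagram_insert: "maya_diagram (insert k M) lo (max hi (k + 1))"
proof
  fix j assume "j < lo"
  then show "j \<in> insert k M" using less_lo_mem by simp
next
  fix j assume "j \<in> insert k M"
  then show "j < max hi (k + 1)" using mem_less_hi by (auto simp: less_max_iff_disj)
qed

lemma finite_above: "finite {k\<in>M. m < k}"
  by (rule finite_subset[of _ "{m<..<hi}"]) (auto dest: mem_less_hi)

lemma bdd_above_part: "bdd_above {k\<in>M. P k}"
  by (rule bdd_aboveI[of _ hi]) (auto dest: mem_less_hi)

lemma Sup_below:
  shows "Sup {k\<in>M. k < m} \<in> M" "Sup {k\<in>M. k < m} < m"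
    and "k \<in> M \<Longrightarrow> k < m \<Longrightarrow> k \<le> Sup {k\<in>M. k < m}"
proof -
  have "min lo m - 1 \<in> {k\<in>M. k < m}" using less_lo_mem by auto
  then have "Sup {k\<in>M. k < m} \<in> {k\<in>M. k < m}"
    by (intro int_Sup_mem bdd_above_part) auto
  then show "Sup {k\<in>M. k < m} \<in> M" "Sup {k\<in>M. k < m} < m" by auto
  show "k \<in> M \<Longrightarrow> k < m \<Longrightarrow> k \<le> Sup {k\<in>M. k < m}"
    by (rule cSup_upper) (auto intro: bdd_above_part)
qed

lemma maya_seq_0: "maya_seq M 0 \<in> M" "k \<in> M \<Longrightarrow> k \<le> maya_seq M 0"
proof -
  have "lo - 1 \<in> M" by (rule less_lo_mem) simp
  then show "maya_seq M 0 \<in> M"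
    using int_Sup_mem[of M] bdd_above_part[of "\<lambda>_. True"] by auto
  show "k \<in> M \<Longrightarrow> k \<le> maya_seq M 0"
    using cSup_upper[of k M] bdd_above_part[of "\<lambda>_. True"] by simp
qed

lemma maya_seq_mem: "maya_seq M i \<in> M"
  using maya_seq_0 by (cases i) (auto simp: Sup_below)

lemma maya_seq_Suc_less: "maya_seq M (Suc i) < maya_seq M i"
  by (simp add: Sup_below)

lemma card_above_maya_seq: "card {k\<in>M. maya_seq M i < k} = i"
proof (induction i)
  case 0
  have "{k\<in>M. maya_seq M 0 < k} = {}" using maya_seq_0(2) by force
  then show ?case by (simp only: card.empty)
next
  case (Suc i)
  have "{k\<in>M. maya_seq M (Suc i) < k} = insert (maya_seq M i) {k\<in>M. maya_seq M i < k}"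
    using Sup_below(3)[of _ "maya_seq M i"] maya_seq_mem[of i] maya_seq_Suc_less[of i]
    by (fastforce simp del: maya_seq.simps simp: maya_seq.simps(2)[symmetric])
  then show ?case using Suc.IH finite_above by simp
qed

lemma maya_seq_gap: "i \<le> j \<Longrightarrow> maya_seq M j + int (j - i) \<le> maya_seq M i"
proof (induction j)
  case (Suc j)
  then show ?case
    using maya_seq_Suc_less[of j] by (cases "i = Suc j") (auto simp: Suc_diff_le)
qed simp

lemma inj_maya_seq: "inj (maya_seq M)"
proof (rule injI)
  have less: "maya_seq M j < maya_seq M i" if "i < j" for i j
    using maya_seq_gap[of i j] that by simp
  show "maya_seq M i = maya_seq M j \<Longrightarrow> i = j" for i j
    using less[of i j] less[of j i] by (cases i j rule: linorder_cases) auto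
qed

end

locale maya_cut = maya_diagram +
  fixes L :: int
  assumes cut_le_lo: "L \<le> lo"
begin

definition above_cut :: "int set" where
  "above_cut = {k\<in>M. L \<le> k}"

definition rank :: nat where
  "rank = card above_cut"

lemma finite_above_cut: "finite above_cut"
  by (rule finite_subset[of _ "{L..<hi}"]) (auto simp: above_cut_def dest: mem_less_hi)

lemma two_le_rank:
  assumes "L + 1 < lo"
  shows "2 \<le> rank"
proof -
  have "{L, L + 1} \<subseteq> above_cut"
    using less_lo_mem assms by (auto simp: above_cut_def)
  then have "card {L, L + 1} \<le> rank"
    unfolding rank_def by (rule card_mono[OF finite_above_cut])
  then show ?thesis by simp
qed

lemma maya_seq_ge_cut: "i < rank \<Longrightarrow> L \<le> maya_seq M i"
proof (rule ccontr)
  assume i: "i < rank" and "\<not> L \<le> maya_seq M i"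
  then have "above_cut \<subseteq> {k\<in>M. maya_seq M i < k}" by (auto simp: above_cut_def)
  then have "rank \<le> card {k\<in>M. maya_seq M i < k}"
    unfolding rank_def using finite_above by (rule card_mono[rotated])
  then show False using card_above_maya_seq[of i] i by simp
qed

lemma maya_seq_beyond_rank: "rank \<le> i \<Longrightarrow> maya_seq M i = L - 1 - int (i - rank)"
proof -
  assume i: "rank \<le> i"
  let ?m = "maya_seq M i"
  have mL: "?m < L"
  proof (rule ccontr)
    assume "\<not> ?m < L"
    then have "?m \<in> above_cut" "{k\<in>M. ?m < k} \<subseteq> above_cut - {?m}"
      using maya_seq_mem[of i] by (auto simp: above_cut_def)
    then have "card {k\<in>M. ?m < k} < rank"
      unfolding rank_def using finite_above_cut
      by (meson card_Diff1_less card_mono finite_Diff le_less_trans)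
    then show False using card_above_maya_seq[of i] i by simp
  qed
  have "{k\<in>M. ?m < k} = above_cut \<union> {?m<..<L}"
    using mL less_lo_mem cut_le_lo by (auto simp: above_cut_def)
  then have "i = card (above_cut \<union> {?m<..<L})" using card_above_maya_seq[of i] by simp
  also have "\<dots> = rank + card {?m<..<L}" unfolding rank_def
    by (rule card_Un_disjoint) (use finite_above_cut in \<open>auto simp: above_cut_def\<close>)
  finally have "i = rank + nat (L - ?m - 1)" by simp
  then show ?thesis using mL by auto
qed

lemma maya_charge_eq: "maya_charge M = L + int rank"
  by (rule maya_charge_eqI[of rank]) (simp add: maya_seq_beyond_rank)

lemma maya_part_eq: "1 \<le> i \<Longrightarrow> maya_part M i = maya_seq M (i - 1) + int i - (L + int rank)"
  by (simp add: maya_part_def maya_charge_eq)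

lemma maya_part_eq_0: "rank < i \<Longrightarrow> maya_part M i = 0"
  using maya_seq_beyond_rank[of "i - 1"] by (simp add: maya_part_eq)

lemma maya_part_Suc_le: "1 \<le> i \<Longrightarrow> maya_part M (Suc i) \<le> maya_part M i"
  using maya_seq_Suc_less[of "i - 1"] by (simp add: maya_part_eq)

lemma maya_part_nonneg: "1 \<le> i \<Longrightarrow> 0 \<le> maya_part M i"
proof -
  assume i: "1 \<le> i"
  define R where "R = max (i - 1) rank"
  have "maya_seq M R + int (R - (i - 1)) \<le> maya_seq M (i - 1)"
    by (rule maya_seq_gap) (simp add: R_def)
  moreover have "maya_seq M R = L - 1 - int (R - rank)"
    by (rule maya_seq_beyond_rank) (simp add: R_def)
  ultimately show ?thesis using i by (simp add: maya_part_eq R_def)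
qed

lemma maya_part_support: "{i. 1 \<le> i \<and> maya_part M i \<noteq> 0} \<subseteq> {1..rank}"
proof
  fix i assume "i \<in> {i. 1 \<le> i \<and> maya_part M i \<noteq> 0}"
  then have "1 \<le> i" "\<not> rank < i" using maya_part_eq_0 by auto
  then show "i \<in> {1..rank}" by simp
qed

lemma maya_part_eq_0_beyond_length: "part_length (maya_part M) < i \<Longrightarrow> maya_part M i = 0"
proof (rule ccontr)
  assume i: "part_length (maya_part M) < i" and nz: "maya_part M i \<noteq> 0"
  have "1 \<le> i" using i by simp
  have "maya_part M j \<noteq> 0" if "1 \<le> j" "j \<le> i" for j
    using that
  proof (induction "i - j" arbitrary: j)
    case (Suc d)
    then have "maya_part M (Suc j) \<noteq> 0" by simp
    then show ?case
      using maya_part_Suc_le[of j] maya_part_nonneg[of "Suc j"] Suc.prems by linarith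
  qed (use nz in simp)
  then have "{1..i} \<subseteq> {i. 1 \<le> i \<and> maya_part M i \<noteq> 0}" by auto
  then have "i \<le> part_length (maya_part M)"
    unfolding part_length_def using maya_part_support
    by (metis card_atLeastAtMost card_mono diff_Suc_1 finite_atLeastAtMost finite_subset)
  then show False using i by simp
qed

lemma part_length_le_rank: "part_length (maya_part M) \<le> rank"
  unfolding part_length_def using maya_part_support card_mono[of "{1..rank}"] by fastforce

lemma schur_maya_eq_detf:
  assumes "part_length (maya_part M) \<le> K"
  shows "schur (maya_part M) t = detf K (\<lambda>i j. schur_p t (maya_part M (i + 1) - int (i + 1) + int (j + 1)))"
  using assms
proof (induction K)
  case 0
  then show ?case by (simp add: schur_def detf_def)
next
  case (Suc K)
  show ?case
  proof (cases "part_length (maya_part M) \<le> K")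
    case True
    then have "maya_part M (Suc K) = 0" by (simp add: maya_part_eq_0_beyond_length)
    then have "detf (Suc K) (\<lambda>i j. schur_p t (maya_part M (i + 1) - int (i + 1) + int (j + 1)))
        = detf K (\<lambda>i j. schur_p t (maya_part M (i + 1) - int (i + 1) + int (j + 1)))"
      by (intro detf_last_row_unit) (auto simp: schur_p_def)
    then show ?thesis using Suc.IH True by simp
  next
    case False
    then have "part_length (maya_part M) = Suc K" using Suc.prems by simp
    then show ?thesis by (simp add: schur_def detf_def)
  qed
qed

lemma maya_seq_image: "maya_seq M ` {0..<rank} = above_cut"
proof (rule card_subset_eq[OF finite_above_cut])
  show "maya_seq M ` {0..<rank} \<subseteq> above_cut"
    using maya_seq_ge_cut maya_seq_mem by (auto simp: above_cut_def)
  show "card (maya_seq M ` {0..<rank}) = card above_cut"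
    using card_image[of "maya_seq M" "{0..<rank}"] inj_maya_seq by (simp add: rank_def inj_on_subset)
qed

lemma insert_seq_image:
  assumes "k \<notin> M"
  defines "c \<equiv> \<lambda>i. if i < rank then maya_seq M i - L else k - L"
  shows "c ` {0..<rank} = (\<lambda>j. j - L) ` above_cut"
    and "c ` {0..<Suc rank} = (\<lambda>j. j - L) ` insert k above_cut"
    and "inj_on c {0..<Suc rank}"
proof -
  have "c ` {0..<rank} = (\<lambda>i. maya_seq M i - L) ` {0..<rank}"
    by (rule image_cong) (simp_all add: c_def)
  also have "\<dots> = (\<lambda>j. j - L) ` above_cut"
    unfolding maya_seq_image[symmetric] image_image ..
  finally show prefix: "c ` {0..<rank} = (\<lambda>j. j - L) ` above_cut" .
  have "c ` {0..<Suc rank} = insert (c rank) (c ` {0..<rank})"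
    by (simp add: atLeast0_lessThan_Suc)
  then show image: "c ` {0..<Suc rank} = (\<lambda>j. j - L) ` insert k above_cut"
    unfolding prefix by (simp add: c_def)
  have "k \<notin> above_cut" using assms(1) by (simp add: above_cut_def)
  then have "card (c ` {0..<Suc rank}) = card {0..<Suc rank}"
    unfolding image using finite_above_cut by (subst card_image) (auto simp: inj_on_def rank_def)
  then show "inj_on c {0..<Suc rank}" by (rule eq_card_imp_inj_on[rotated]) simp
qed

text \<open>The Schur function is, up to sign, the Hermite determinant of the elements above the cut
  (shifted by \<open>L\<close>) listed in any order: reversing the rows turns Jacobi--Trudi into this
  form, and reordering the elements permutes the columns.\<close>
lemma schur_maya_eq_hermite_det:
  assumes "inj_on c {0..<rank}" "c ` {0..<rank} = (\<lambda>k. k - L) ` above_cut"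
  obtains \<sigma> :: real where "\<sigma> = 1 \<or> \<sigma> = -1" "\<And>x. schur (maya_part M) (times_x x) = \<sigma> * hermite_det c rank x"
proof -
  obtain p where p: "p permutes {0..<rank}" and p_rev: "\<And>j. j < rank \<Longrightarrow> p j = rank - 1 - j"
    by (rule permutes_reverse[of rank]) blast
  have seq_inj: "inj_on (\<lambda>i. maya_seq M i - L) {0..<rank}"
    using inj_maya_seq by (auto simp: inj_on_def dest: injD)
  have seq_image: "(\<lambda>i. maya_seq M i - L) ` {0..<rank} = c ` {0..<rank}"
    unfolding assms(2) maya_seq_image[symmetric] by (simp only: image_image)
  obtain q where q: "q permutes {0..<rank}"
    and q_seq: "\<And>i. i \<in> {0..<rank} \<Longrightarrow> maya_seq M i - L = c (q i)"
    by (rule inj_on_same_image_permutes[of "{0..<rank}" "\<lambda>i. maya_seq M i - L" c,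
          OF _ seq_inj assms(1) seq_image]) auto
  have schur_eq: "schur (maya_part M) (times_x x) = signof p * signof q * hermite_det c rank x" for x
  proof -
    define G where "G = (\<lambda>j i. hermite_p (c i - int j) x)"
    have "schur (maya_part M) (times_x x)
        = detf rank (\<lambda>i j. hermite_p (maya_part M (i + 1) - int (i + 1) + int (j + 1)) x)"
      using schur_maya_eq_detf[OF part_length_le_rank] by (simp add: hermite_p_def)
    also have "\<dots> = detf rank (\<lambda>j i. hermite_p (maya_part M (i + 1) - int (i + 1) + int (j + 1)) x)"
      by (rule detf_transpose)
    also have "\<dots> = detf rank (\<lambda>j i. G (p j) (q i))"
    proof (rule detf_cong)
      fix j i assume "j < rank" "i < rank"
      then have "maya_part M (i + 1) - int (i + 1) + int (j + 1) = c (q i) - int (p j)"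
        using p_rev[of j] q_seq[of i] by (simp add: maya_part_eq of_nat_diff)
      then show "hermite_p (maya_part M (i + 1) - int (i + 1) + int (j + 1)) x = G (p j) (q i)"
        by (simp add: G_def)
    qed
    also have "\<dots> = signof p * detf rank (\<lambda>j i. G j (q i))"
      by (rule detf_permute_rows[OF p, of "\<lambda>j i. G j (q i)"])
    also have "detf rank (\<lambda>j i. G j (q i)) = signof q * detf rank G"
      by (rule detf_permute_cols[OF q])
    finally show ?thesis by (simp add: hermite_det_def G_def)
  qed
  have "signof p * signof q = (1::real) \<or> signof p * signof q = (-1::real)"
    using signof_pm_one[of p] signof_pm_one[of q] by auto
  then show ?thesis using schur_eq by (rule that)
qed

end

theorem hirota_schur_insert:
  assumes M: "maya_diagram M lo hi" and k: "k \<notin> M"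
  shows "hirota (of_int (k - maya_charge M)) (\<lambda>x. schur (maya_part M) (times_x x))
           (\<lambda>x. schur (maya_part (insert k M)) (times_x x)) x = 0"
proof -
  define L where "L = min lo k - 2"
  interpret A: maya_cut M lo hi L
    using M by (rule maya_cut.intro) (unfold_locales, simp add: L_def)
  interpret B: maya_cut "insert k M" lo "max hi (k + 1)" L
    using A.maya_diagram_insert by (rule maya_cut.intro) (unfold_locales, simp add: L_def)
  let ?r = A.rank
  have "L \<le> k" "L + 1 < lo" by (simp_all add: L_def)
  then have above_cut_insert: "B.above_cut = insert k A.above_cut" "k \<notin> A.above_cut"
    using k by (auto simp: A.above_cut_def B.above_cut_def)
  then have rank_insert: "B.rank = Suc ?r"
    using A.finite_above_cut by (simp add: A.rank_def B.rank_def)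
  have rank_ge_2: "2 \<le> ?r" using \<open>L + 1 < lo\<close> by (rule A.two_le_rank)
  define c where "c = (\<lambda>i. if i < ?r then maya_seq M i - L else k - L)"
  note c_image = A.insert_seq_image[OF k, folded c_def, folded above_cut_insert(1)]
  have c_inj: "inj_on c {0..<Suc ?r}" "inj_on c {0..<?r}"
    using c_image(3) by (auto intro: inj_on_subset)
  obtain \<sigma>1 :: real where "\<sigma>1 = 1 \<or> \<sigma>1 = -1"
    and schur_M: "\<And>x. schur (maya_part M) (times_x x) = \<sigma>1 * hermite_det c ?r x"
    by (rule A.schur_maya_eq_hermite_det[OF c_inj(2) c_image(1)]) blast
  obtain \<sigma>2 :: real where "\<sigma>2 = 1 \<or> \<sigma>2 = -1"
    and schur_insert: "\<And>x. schur (maya_part (insert k M)) (times_x x) = \<sigma>2 * hermite_det c (Suc ?r) x"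
    by (rule B.schur_maya_eq_hermite_det[unfolded rank_insert, OF c_inj(1) c_image(2)]) blast
  have "of_int (k - maya_charge M) = of_int (c ?r) - (of_nat ?r :: real)"
    by (simp add: A.maya_charge_eq c_def)
  then show ?thesis
    unfolding schur_M schur_insert by (simp only: hermite_rows.hirota_hermite_det[OF rank_ge_2])
qed

section \<open>Three-coloured Maya diagrams\<close>

definition maya3 :: "int \<Rightarrow> int \<Rightarrow> int \<Rightarrow> int set" where
  "maya3 a b c = ((\<lambda>k. 3 * k) ` D_set a) \<union> ((\<lambda>k. 3 * k + 1) ` D_set b) \<union> ((\<lambda>k. 3 * k + 2) ` D_set c)"

lemma M_mn_eq_maya3: "M_mn m n = maya3 m n 0"
  by (simp add: M_mn_def maya3_def)

lemma mem_residue_image_iff: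
  fixes x \<rho> :: int
  assumes "0 \<le> \<rho>" "\<rho> < 3"
  shows "x \<in> (\<lambda>q. 3 * q + \<rho>) ` A \<longleftrightarrow> x mod 3 = \<rho> \<and> x div 3 \<in> A"
proof
  assume "x \<in> (\<lambda>q. 3 * q + \<rho>) ` A"
  then obtain q where "q \<in> A" "x = 3 * q + \<rho>" by auto
  moreover have "(3 * q + \<rho>) div 3 = q" "(3 * q + \<rho>) mod 3 = \<rho>" using assms by auto
  ultimately show "x mod 3 = \<rho> \<and> x div 3 \<in> A" by simp
next
  assume "x mod 3 = \<rho> \<and> x div 3 \<in> A"
  moreover have "x = 3 * (x div 3) + x mod 3" by simp
  ultimately show "x \<in> (\<lambda>q. 3 * q + \<rho>) ` A" by (metis image_eqI)
qed

lemma mem_maya3_iff: "k \<in> maya3 a b c \<longleftrightarrow>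
   (k mod 3 = 0 \<and> k div 3 < a) \<or> (k mod 3 = 1 \<and> k div 3 < b) \<or> (k mod 3 = 2 \<and> k div 3 < c)"
  using mem_residue_image_iff[of 0 k "D_set a"] mem_residue_image_iff[of 1 k "D_set b"]
    mem_residue_image_iff[of 2 k "D_set c"]
  by (auto simp: maya3_def D_set_def)

lemma maya_diagram_maya3: "maya_diagram (maya3 a b c) (3 * min a (min b c)) (3 * max a (max b c))"
  by unfold_locales (unfold mem_maya3_iff, presburger+)

lemma maya_charge_maya3: "maya_charge (maya3 a b c) = a + b + c"
proof -
  define K where "K = min a (min b c)"
  interpret maya_cut "maya3 a b c" "3 * K" "3 * max a (max b c)" "3 * K"
    by (rule maya_cut.intro) (use maya_diagram_maya3[of a b c] in \<open>simp_all add: K_def maya_cut_axioms_def\<close>)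
  define A0 A1 A2 where "A0 = (\<lambda>q. 3 * q) ` {K..<a}" and "A1 = (\<lambda>q. 3 * q + 1) ` {K..<b}"
    and "A2 = (\<lambda>q. 3 * q + 2) ` {K..<c}"
  have "above_cut = A0 \<union> A1 \<union> A2"
  proof (rule Set.set_eqI)
    fix x :: int
    have "3 * K \<le> x \<longleftrightarrow> K \<le> x div 3" by presburger
    then show "x \<in> above_cut \<longleftrightarrow> x \<in> A0 \<union> A1 \<union> A2"
      unfolding above_cut_def A0_def A1_def A2_def Un_iff mem_Collect_eq mem_maya3_iff
        mem_residue_image_iff[where \<rho>=0, simplified] mem_residue_image_iff[where \<rho>=1, simplified]
        mem_residue_image_iff[where \<rho>=2, simplified]
      by auto
  qed
  moreover have "card A0 = nat (a - K)" "card A1 = nat (b - K)" "card A2 = nat (c - K)"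
    unfolding A0_def A1_def A2_def by (simp_all add: card_image inj_on_def)
  moreover have "A0 \<inter> A1 = {}" "(A0 \<union> A1) \<inter> A2 = {}"
    unfolding A0_def A1_def A2_def by auto presburger+
  moreover have "finite A0" "finite A1" "finite A2" by (simp_all add: A0_def A1_def A2_def)
  moreover have "K \<le> a" "K \<le> b" "K \<le> c" by (auto simp: K_def)
  ultimately have "int rank = (a - K) + (b - K) + (c - K)"
    by (simp add: rank_def card_Un_disjoint)
  then show ?thesis using maya_charge_eq by simp
qed

lemma int_Sup_translate:
  fixes X :: "int set"
  assumes "X \<noteq> {}" "bdd_above X"
  shows "Sup ((\<lambda>k. k + d) ` X) = Sup X + d"
  using int_Sup_mem[OF assms] cSup_upper[OF _ assms(2)] by (intro cSup_eq_maximum) auto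

lemma maya_part_translate:
  assumes M: "maya_diagram M lo hi"
  shows "maya_part ((\<lambda>k. k + d) ` M) = maya_part M"
proof -
  interpret A: maya_cut M lo hi lo
    using M by (rule maya_cut.intro) (unfold_locales, simp)
  define S where "S = (\<lambda>k. k + d) ` M"
  have seq: "maya_seq S i = maya_seq M i + d" for i
  proof (induction i)
    case 0
    have "maya_seq S 0 = Sup ((\<lambda>k. k + d) ` M)" by (simp add: S_def)
    also have "\<dots> = Sup M + d"
      using A.maya_seq_mem[of 0] A.bdd_above_part[of "\<lambda>_. True"] by (intro int_Sup_translate) auto
    finally show ?case by simp
  next
    case (Suc i)
    have "{k \<in> S. k < maya_seq S i} = (\<lambda>k. k + d) ` {k\<in>M. k < maya_seq M i}"
      unfolding Suc.IH unfolding S_def by force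
    then have "maya_seq S (Suc i) = Sup ((\<lambda>k. k + d) ` {k\<in>M. k < maya_seq M i})" by simp
    also have "\<dots> = Sup {k\<in>M. k < maya_seq M i} + d"
      using A.maya_seq_mem[of "Suc i"] A.maya_seq_Suc_less[of i] A.bdd_above_part
      by (intro int_Sup_translate) auto
    finally show ?case by simp
  qed
  have "maya_seq S i + int (i + 1) = maya_charge M + d" if "A.rank \<le> i" for i
  proof -
    have "int (i - A.rank) = int i - int A.rank" using that by simp
    then show ?thesis
      unfolding seq A.maya_seq_beyond_rank[OF that] A.maya_charge_eq by linarith
  qed
  then have "maya_charge S = maya_charge M + d" by (rule maya_charge_eqI)
  then show ?thesis
    unfolding S_def[symmetric] by (simp add: fun_eq_iff maya_part_def seq)
qed

lemma s_mn_eq_schur_maya3: "s_mn m n = (\<lambda>x. schur (maya_part (maya3 m n 0)) (times_x x))"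
  by (simp add: fun_eq_iff s_mn_def lambda_mn_def M_mn_eq_maya3 times_x_def)

lemma hirota_s_mn_succ_m: "hirota (of_int (2 * m - n)) (s_mn m n) (s_mn (m + 1) n) x = 0"
proof -
  have "3 * m \<notin> maya3 m n 0" and ins: "insert (3 * m) (maya3 m n 0) = maya3 (m + 1) n 0"
    unfolding set_eq_iff insert_iff mem_maya3_iff by presburger+
  then have "hirota (of_int (3 * m - (m + n + 0))) (s_mn m n) (s_mn (m + 1) n) x = 0"
    using hirota_schur_insert[OF maya_diagram_maya3[of m n 0], where k="3 * m" and x=x]
    unfolding s_mn_eq_schur_maya3 maya_charge_maya3 by simp
  moreover have "3 * m - (m + n + 0) = 2 * m - n" by simp
  ultimately show ?thesis by simp
qed

lemma hirota_s_mn_succ_n: "hirota (of_int (2 * n - m + 1)) (s_mn m n) (s_mn m (n + 1)) x = 0"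
proof -
  have "3 * n + 1 \<notin> maya3 m n 0" and ins: "insert (3 * n + 1) (maya3 m n 0) = maya3 m (n + 1) 0"
    unfolding set_eq_iff insert_iff mem_maya3_iff by presburger+
  then have "hirota (of_int (3 * n + 1 - (m + n + 0))) (s_mn m n) (s_mn m (n + 1)) x = 0"
    using hirota_schur_insert[OF maya_diagram_maya3[of m n 0], where k="3 * n + 1" and x=x]
    unfolding s_mn_eq_schur_maya3 maya_charge_maya3 by simp
  moreover have "3 * n + 1 - (m + n + 0) = 2 * n - m + 1" by simp
  ultimately show ?thesis by (simp only:)
qed

text \<open>Up to translation, which does not change the partition, \<open>M(m+1,n+1)\<close> is \<open>maya3 0 m n\<close>
  and \<open>M(m,n)\<close> is \<open>maya3 0 m n\<close> with the bead \<open>0\<close> added.\<close>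
lemma hirota_s_mn_succ_both: "hirota (of_int (- (m + n))) (s_mn (m + 1) (n + 1)) (s_mn m n) x = 0"
proof -
  have "0 \<notin> maya3 0 m n" unfolding mem_maya3_iff by presburger
  have "(\<lambda>k. k + (-2)) ` maya3 (m + 1) (n + 1) 0 = maya3 0 m n"
  proof (rule Set.set_eqI)
    fix x :: int
    have shift: "x \<in> (\<lambda>k. k + (-2)) ` A \<longleftrightarrow> x + 2 \<in> A" for A
      by (auto intro: image_eqI[of _ _ "x + 2"])
    have residues: "(x mod 3 = 0 \<and> (x + 2) mod 3 = 2 \<and> (x + 2) div 3 = x div 3) \<or>
        (x mod 3 = 1 \<and> (x + 2) mod 3 = 0 \<and> (x + 2) div 3 = x div 3 + 1) \<or>
        (x mod 3 = 2 \<and> (x + 2) mod 3 = 1 \<and> (x + 2) div 3 = x div 3 + 1)" by presburger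
    show "x \<in> (\<lambda>k. k + (-2)) ` maya3 (m + 1) (n + 1) 0 \<longleftrightarrow> x \<in> maya3 0 m n"
      unfolding shift mem_maya3_iff using residues by (elim disjE) auto
  qed
  note part_succ = maya_part_translate[OF maya_diagram_maya3[of "m + 1" "n + 1" 0], where d="-2", unfolded this]
  have "(\<lambda>k. k + 1) ` maya3 m n 0 = insert 0 (maya3 0 m n)"
  proof (rule Set.set_eqI)
    fix x :: int
    have shift: "x \<in> (\<lambda>k. k + 1) ` A \<longleftrightarrow> x - 1 \<in> A" for A
      by (auto intro: image_eqI[of _ _ "x - 1"])
    have residues: "(x mod 3 = 0 \<and> (x - 1) mod 3 = 2 \<and> (x - 1) div 3 = x div 3 - 1) \<or>
        (x mod 3 = 1 \<and> (x - 1) mod 3 = 0 \<and> (x - 1) div 3 = x div 3) \<or>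
        (x mod 3 = 2 \<and> (x - 1) mod 3 = 1 \<and> (x - 1) div 3 = x div 3)" by presburger
    have zero: "x div 3 < 1 \<and> x mod 3 = 0 \<and> \<not> x div 3 < 0 \<longleftrightarrow> x = 0" by presburger
    show "x \<in> (\<lambda>k. k + 1) ` maya3 m n 0 \<longleftrightarrow> x \<in> insert 0 (maya3 0 m n)"
      unfolding shift insert_iff mem_maya3_iff using residues zero by (elim disjE) auto
  qed
  note part = maya_part_translate[OF maya_diagram_maya3[of m n 0], where d=1, unfolded this]
  show ?thesis
    using hirota_schur_insert[OF maya_diagram_maya3[of 0 m n] \<open>0 \<notin> maya3 0 m n\<close>, where x=x]
    unfolding s_mn_eq_schur_maya3 maya_charge_maya3 part_succ part[symmetric] by simp
qed

lemma of_int_diff_div_3: "a - b = 3 * z \<Longrightarrow> (of_int a - of_int b) / 3 = (of_int z :: real)"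
  by (metis nonzero_mult_div_cancel_left of_int_diff of_int_mult of_int_numeral zero_neq_numeral)

theorem proposition5p5:
  shows "(\<forall>m n :: int. solves_system (s_mn m n) (s_mn (m + 1) n) (s_mn (m + 1) (n + 1))
            (of_int (3 * m + 1)) (of_int (3 * (n - m) + 1)) (of_int (- 3 * n + 1)))
       \<and> (\<forall>m n :: int. solves_system (s_mn m n) (s_mn m (n + 1)) (s_mn (m + 1) (n + 1))
            (of_int (3 * n + 2)) (of_int (3 * (m - n) - 1)) (of_int (- 3 * m + 2)))"
proof (intro conjI allI)
  fix m n :: int
  have coefficients: "(of_int (3 * m + 1) - of_int (3 * (n - m) + 1)) / 3 = (of_int (2 * m - n) :: real)"
    "(of_int (3 * (n - m) + 1) - of_int (- 3 * n + 1)) / 3 = (of_int (2 * n - (m + 1) + 1) :: real)"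
    "(of_int (- 3 * n + 1) - of_int (3 * m + 1)) / 3 = (of_int (- (m + n)) :: real)"
    by (rule of_int_diff_div_3, simp)+
  show "solves_system (s_mn m n) (s_mn (m + 1) n) (s_mn (m + 1) (n + 1))
      (of_int (3 * m + 1)) (of_int (3 * (n - m) + 1)) (of_int (- 3 * n + 1))"
    unfolding solves_system_def coefficients
    using hirota_s_mn_succ_m hirota_s_mn_succ_n hirota_s_mn_succ_both by blast
next
  fix m n :: int
  have coefficients: "(of_int (3 * n + 2) - of_int (3 * (m - n) - 1)) / 3 = (of_int (2 * n - m + 1) :: real)"
    "(of_int (3 * (m - n) - 1) - of_int (- 3 * m + 2)) / 3 = (of_int (2 * m - (n + 1)) :: real)"
    "(of_int (- 3 * m + 2) - of_int (3 * n + 2)) / 3 = (of_int (- (m + n)) :: real)"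
    by (rule of_int_diff_div_3, simp)+
  show "solves_system (s_mn m n) (s_mn m (n + 1)) (s_mn (m + 1) (n + 1))
      (of_int (3 * n + 2)) (of_int (3 * (m - n) - 1)) (of_int (- 3 * m + 2))"
    unfolding solves_system_def coefficients
    using hirota_s_mn_succ_m hirota_s_mn_succ_n hirota_s_mn_succ_both by blast
qed

end
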